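(* For CCS, let $L_{CCS}$ be the set of all labels of the transition system $C_I$. Then $L_{CCS}$-bisimilarity coincides with ordinary strong bisimilarity of CCS: $\sim^{L_{CCS}}=\sim^{CCS}$.
   Context: CCS processes are built from $\mathbf{0}$, prefixes $a.P$, $\bar a.P$, $\tau.P$, sums, parallel composition $|$ and restriction $(\nu a)$ (extended processes also allow process variables $X$); $\equiv$ is the standard structural congruence, $\rightsquigarrow$ the standard reduction semantics (closed under $\equiv$, restriction and parallel composition, generated by $(a.P+M)|(\bar a.Q+N)\rightsquigarrow P|Q$ and $\tau.P+M\rightsquigarrow P$), and $\sim^{CCS}$ is ordinary strong bisimilarity on the standard CCS LTS with labels $\tau,a,\bar a$. The LTS $C$: (Tau) $P\rightsquigarrow Q$ gives $P\xrightarrow{-}Q$; (Rcv) $P\equiv(\nu A)(a.Q+M|R)$ with $a\notin A$ gives $P\xrightarrow{-|\bar a.X_1}(\nu A)(Q|R|X_1)$; (Snd) $P\equiv(\nu A)(\bar a.Q+M|R)$ with $a\notin A$ gives $P\xrightarrow{-|a.X_1}(\nu A)(Q|R|X_1)$. $C_I$ instantiates the process variable: $P\xrightarrow{C[-]}_{C_I}Q$ iff $P\xrightarrow{C_\epsilon[-]}Q_\epsilon$ in $C$ and a capture-avoiding substitution $\sigma$ of a pure process for $X_1$ has $Q_\epsilon\sigma\equiv Q$ and $C_\epsilon[-]\sigma=C[-]$. For a set $L$ of labels, an $L$-bisimulation is a symmetric relation $\mathcal{R}$ on pure processes such that if $P\,\mathcal{R}\,Q$ and $P\xrightarrow{C[-]}_{C_I}P'$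 then: if $C[-]\in L$, $Q\xrightarrow{C[-]}_{C_I}Q'$ with $P'\,\mathcal{R}\,Q'$; otherwise $C[Q]\rightsquigarrow Q'$ with $P'\,\mathcal{R}\,Q'$. $\sim^L$ is the largest $L$-bisimulation. *)

theory Defs
  imports Main
begin

type_synonym name = nat

datatype pre = In name | Out name | Tau

datatype proc = Sum sm | Par proc proc | Res name proc | Var nat
and sm = Zero | Pref pre proc | Plus sm sm

abbreviation Nil :: proc where "Nil \<equiv> Sum Zero"

fun fn_pre :: "pre \<Rightarrow> name set" where
  "fn_pre (In a) = {a}" | "fn_pre (Out a) = {a}" | "fn_pre Tau = {}"

fun fn_proc :: "proc \<Rightarrow> name set" and fn_sm :: "sm \<Rightarrow> name set" where
  "fn_proc (Sum M) = fn_sm M"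
| "fn_proc (Par P Q) = fn_proc P \<union> fn_proc Q"
| "fn_proc (Res a P) = fn_proc P - {a}"
| "fn_proc (Var X) = {}"
| "fn_sm Zero = {}"
| "fn_sm (Pref \<alpha> P) = fn_pre \<alpha> \<union> fn_proc P"
| "fn_sm (Plus M N) = fn_sm M \<union> fn_sm N"

fun bn_proc :: "proc \<Rightarrow> name set" and bn_sm :: "sm \<Rightarrow> name set" where
  "bn_proc (Sum M) = bn_sm M"
| "bn_proc (Par P Q) = bn_proc P \<union> bn_proc Q"
| "bn_proc (Res a P) = insert a (bn_proc P)"
| "bn_proc (Var X) = {}"
| "bn_sm Zero = {}"
| "bn_sm (Pref \<alpha> P) = bn_proc P"
| "bn_sm (Plus M N) = bn_sm M \<union> bn_sm N"

fun pure_proc :: "proc \<Rightarrow> bool" and pure_sm :: "sm \<Rightarrow> bool" where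
  "pure_proc (Sum M) = pure_sm M"
| "pure_proc (Par P Q) = (pure_proc P \<and> pure_proc Q)"
| "pure_proc (Res a P) = pure_proc P"
| "pure_proc (Var X) = False"
| "pure_sm Zero = True"
| "pure_sm (Pref \<alpha> P) = pure_proc P"
| "pure_sm (Plus M N) = (pure_sm M \<and> pure_sm N)"

definition swap_name :: "name \<Rightarrow> name \<Rightarrow> name \<Rightarrow> name" where
  "swap_name a b c = (if c = a then b else if c = b then a else c)"

fun swap_pre :: "name \<Rightarrow> name \<Rightarrow> pre \<Rightarrow> pre" where
  "swap_pre a b (In c) = In (swap_name a b c)"
| "swap_pre a b (Out c) = Out (swap_name a b c)"
| "swap_pre a b Tau = Tau"

fun swap_proc :: "name \<Rightarrow> name \<Rightarrow> proc \<Rightarrow> proc"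
and swap_sm :: "name \<Rightarrow> name \<Rightarrow> sm \<Rightarrow> sm" where
  "swap_proc a b (Sum M) = Sum (swap_sm a b M)"
| "swap_proc a b (Par P Q) = Par (swap_proc a b P) (swap_proc a b Q)"
| "swap_proc a b (Res c P) = Res (swap_name a b c) (swap_proc a b P)"
| "swap_proc a b (Var X) = Var X"
| "swap_sm a b Zero = Zero"
| "swap_sm a b (Pref \<alpha> P) = Pref (swap_pre a b \<alpha>) (swap_proc a b P)"
| "swap_sm a b (Plus M N) = Plus (swap_sm a b M) (swap_sm a b N)"

text \<open>Substitution of a process for a process variable (textual; capture
  avoidance is imposed separately by requiring that no bound name of the
  target is free in the substituted process).\<close>
fun subst_proc :: "nat \<Rightarrow> proc \<Rightarrow> proc \<Rightarrow> proc"
and subst_sm :: "nat \<Rightarrow> proc \<Rightarrow> sm \<Rightarrow> sm" where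
  "subst_proc X R (Sum M) = Sum (subst_sm X R M)"
| "subst_proc X R (Par P Q) = Par (subst_proc X R P) (subst_proc X R Q)"
| "subst_proc X R (Res c P) = Res c (subst_proc X R P)"
| "subst_proc X R (Var Y) = (if X = Y then R else Var Y)"
| "subst_sm X R Zero = Zero"
| "subst_sm X R (Pref \<alpha> P) = Pref \<alpha> (subst_proc X R P)"
| "subst_sm X R (Plus M N) = Plus (subst_sm X R M) (subst_sm X R N)"

definition capture_free :: "proc \<Rightarrow> proc \<Rightarrow> bool" where
  "capture_free R Q \<longleftrightarrow> bn_proc Q \<inter> fn_proc R = {}"

fun resL :: "name list \<Rightarrow> proc \<Rightarrow> proc" where
  "resL [] P = P"
| "resL (a # as) P = Res a (resL as P)"

inductive scong :: "proc \<Rightarrow> proc \<Rightarrow> bool"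
and scong_sm :: "sm \<Rightarrow> sm \<Rightarrow> bool" where
  sc_refl: "scong P P"
| sc_sym: "scong P Q \<Longrightarrow> scong Q P"
| sc_trans: "scong P Q \<Longrightarrow> scong Q R \<Longrightarrow> scong P R"
| sc_sum: "scong_sm M N \<Longrightarrow> scong (Sum M) (Sum N)"
| sc_par: "scong P P' \<Longrightarrow> scong Q Q' \<Longrightarrow> scong (Par P Q) (Par P' Q')"
| sc_res: "scong P Q \<Longrightarrow> scong (Res a P) (Res a Q)"
| sc_par_assoc: "scong (Par (Par P Q) R) (Par P (Par Q R))"
| sc_par_comm: "scong (Par P Q) (Par Q P)"
| sc_par_nil: "scong (Par P Nil) P"
| sc_res_nil: "scong (Res a Nil) Nil"
| sc_res_comm: "scong (Res a (Res b P)) (Res b (Res a P))"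
| sc_res_par: "a \<notin> fn_proc P \<Longrightarrow> scong (Par P (Res a Q)) (Res a (Par P Q))"
| sc_alpha: "b \<notin> fn_proc P \<Longrightarrow> scong (Res a P) (Res b (swap_proc a b P))"
| ss_refl: "scong_sm M M"
| ss_sym: "scong_sm M N \<Longrightarrow> scong_sm N M"
| ss_trans: "scong_sm M N \<Longrightarrow> scong_sm N K \<Longrightarrow> scong_sm M K"
| ss_pref: "scong P Q \<Longrightarrow> scong_sm (Pref \<alpha> P) (Pref \<alpha> Q)"
| ss_plus: "scong_sm M M' \<Longrightarrow> scong_sm N N' \<Longrightarrow> scong_sm (Plus M N) (Plus M' N')"
| ss_assoc: "scong_sm (Plus (Plus M N) K) (Plus M (Plus N K))"
| ss_comm: "scong_sm (Plus M N) (Plus N M)"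
| ss_zero: "scong_sm (Plus M Zero) M"

inductive red :: "proc \<Rightarrow> proc \<Rightarrow> bool" where
  red_com: "red (Par (Sum (Plus (Pref (In a) P) M)) (Sum (Plus (Pref (Out a) Q) N))) (Par P Q)"
| red_tau: "red (Sum (Plus (Pref Tau P) M)) P"
| red_par: "red P P' \<Longrightarrow> red (Par P Q) (Par P' Q)"
| red_res: "red P P' \<Longrightarrow> red (Res a P) (Res a P')"
| red_struct: "scong P P' \<Longrightarrow> red P' Q' \<Longrightarrow> scong Q' Q \<Longrightarrow> red P Q"

text \<open>Labels are contexts: the hole the hole or the context (hole | R).\<close>
datatype ctx = CHole | CPar proc

fun fill :: "ctx \<Rightarrow> proc \<Rightarrow> proc" where
  "fill CHole P = P"
| "fill (CPar R) P = Par P R"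

fun subst_ctx :: "nat \<Rightarrow> proc \<Rightarrow> ctx \<Rightarrow> ctx" where
  "subst_ctx X R CHole = CHole"
| "subst_ctx X R (CPar S) = CPar (subst_proc X R S)"

inductive ltsC :: "proc \<Rightarrow> ctx \<Rightarrow> proc \<Rightarrow> bool" where
  C_tau: "red P Q \<Longrightarrow> ltsC P CHole Q"
| C_rcv: "scong P (resL A (Par (Sum (Plus (Pref (In a) Q) M)) R)) \<Longrightarrow> a \<notin> set A \<Longrightarrow>
    ltsC P (CPar (Sum (Pref (Out a) (Var 1)))) (resL A (Par (Par Q R) (Var 1)))"
| C_snd: "scong P (resL A (Par (Sum (Plus (Pref (Out a) Q) M)) R)) \<Longrightarrow> a \<notin> set A \<Longrightarrow>
    ltsC P (CPar (Sum (Pref (In a) (Var 1)))) (resL A (Par (Par Q R) (Var 1)))"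

definition ltsCI :: "proc \<Rightarrow> ctx \<Rightarrow> proc \<Rightarrow> bool" where
  "ltsCI P C Q \<longleftrightarrow> pure_proc P \<and>
     (\<exists>Ce Qe S. ltsC P Ce Qe \<and> pure_proc S \<and> capture_free S Qe \<and>
        scong (subst_proc 1 S Qe) Q \<and> subst_ctx 1 S Ce = C)"

definition L_CCS :: "ctx set" where
  "L_CCS = {C. \<exists>P Q. ltsCI P C Q}"

definition L_bisim :: "ctx set \<Rightarrow> (proc \<Rightarrow> proc \<Rightarrow> bool) \<Rightarrow> bool" where
  "L_bisim L Rel \<longleftrightarrow>
     (\<forall>P Q. Rel P Q \<longrightarrow> pure_proc P \<and> pure_proc Q \<and> Rel Q P) \<and>
     (\<forall>P Q C P'. Rel P Q \<and> ltsCI P C P' \<longrightarrow>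
        (if C \<in> L then (\<exists>Q'. ltsCI Q C Q' \<and> Rel P' Q')
         else (\<exists>Q'. red (fill C Q) Q' \<and> Rel P' Q')))"

definition L_bisimilar :: "ctx set \<Rightarrow> proc \<Rightarrow> proc \<Rightarrow> bool" where
  "L_bisimilar L P Q \<longleftrightarrow> (\<exists>Rel. L_bisim L Rel \<and> Rel P Q)"

inductive ccs_trans :: "proc \<Rightarrow> pre \<Rightarrow> proc \<Rightarrow> bool" where
  t_pref: "ccs_trans (Sum (Pref \<alpha> P)) \<alpha> P"
| t_sumL: "ccs_trans (Sum M) \<alpha> P' \<Longrightarrow> ccs_trans (Sum (Plus M N)) \<alpha> P'"
| t_sumR: "ccs_trans (Sum N) \<alpha> P' \<Longrightarrow> ccs_trans (Sum (Plus M N)) \<alpha> P'"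
| t_parL: "ccs_trans P \<alpha> P' \<Longrightarrow> ccs_trans (Par P Q) \<alpha> (Par P' Q)"
| t_parR: "ccs_trans Q \<alpha> Q' \<Longrightarrow> ccs_trans (Par P Q) \<alpha> (Par P Q')"
| t_comL: "ccs_trans P (In a) P' \<Longrightarrow> ccs_trans Q (Out a) Q' \<Longrightarrow> ccs_trans (Par P Q) Tau (Par P' Q')"
| t_comR: "ccs_trans P (Out a) P' \<Longrightarrow> ccs_trans Q (In a) Q' \<Longrightarrow> ccs_trans (Par P Q) Tau (Par P' Q')"
| t_res: "ccs_trans P \<alpha> P' \<Longrightarrow> a \<notin> fn_pre \<alpha> \<Longrightarrow> ccs_trans (Res a P) \<alpha> (Res a P')"

definition ccs_bisim :: "(proc \<Rightarrow> proc \<Rightarrow> bool) \<Rightarrow> bool" where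
  "ccs_bisim Rel \<longleftrightarrow>
     (\<forall>P Q \<alpha> P'. Rel P Q \<and> ccs_trans P \<alpha> P' \<longrightarrow> (\<exists>Q'. ccs_trans Q \<alpha> Q' \<and> Rel P' Q')) \<and>
     (\<forall>P Q \<alpha> Q'. Rel P Q \<and> ccs_trans Q \<alpha> Q' \<longrightarrow> (\<exists>P'. ccs_trans P \<alpha> P' \<and> Rel P' Q'))"

definition ccs_bisimilar :: "proc \<Rightarrow> proc \<Rightarrow> bool" where
  "ccs_bisimilar P Q \<longleftrightarrow> (\<exists>Rel. ccs_bisim Rel \<and> Rel P Q)"

end

theory Submission
  imports Defs
begin

text \<open>Structural congruence is a strong bisimulation up to itself, so strong bisimilarity
  absorbs \<open>\<equiv>\<close>. Reductions are exactly the \<open>\<tau>\<close>-transitions up to \<open>\<equiv>\<close>, and \<open>C\<^sub>I\<close> has a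
  step \<open>P \<rightarrow> P'\<close> labelled \<open>- | co\<alpha>.S\<close> exactly when \<open>P\<close> has a visible transition
  \<open>P \<midarrow>\<alpha>\<rightarrow> P''\<close> with \<open>P' \<equiv> P'' | S\<close>: every visible transition stems from a prefix
  \<open>\<alpha>.Q\<close> exposed under restrictions, whose bound names can be renamed apart from \<open>S\<close>.
  All labels of \<open>C\<^sub>I\<close> lie in \<open>L_CCS\<close>, so an \<open>L_CCS\<close>-bisimulation, tested with the
  inert continuation \<open>S = 0\<close>, is a strong bisimulation up to \<open>\<equiv>\<close>; conversely strong
  bisimilarity of pure processes is an \<open>L_CCS\<close>-bisimulation because it is preserved by
  \<open>- | S\<close>.\<close>

lemma swap_name_swap_name [simp]: "swap_name a b (swap_name a b c) = c"
  by (simp add: swap_name_def)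

lemma swap_name_eq_iff [simp]: "swap_name a b x = swap_name a b y \<longleftrightarrow> x = y"
  by (metis swap_name_swap_name)

lemma swap_pre_swap_pre [simp]: "swap_pre a b (swap_pre a b \<alpha>) = \<alpha>"
  by (cases \<alpha>) auto

lemma swap_proc_swap_proc [simp]:
  "swap_proc a b (swap_proc a b P) = P" "swap_sm a b (swap_sm a b M) = M"
  by (induction P and M rule: proc.induct sm.induct) auto

lemma pure_swap [simp]:
  "pure_proc (swap_proc a b P) = pure_proc P" "pure_sm (swap_sm a b M) = pure_sm M"
  by (induction P and M rule: proc.induct sm.induct) auto

lemma swap_pre_fresh: "a \<notin> fn_pre \<alpha> \<Longrightarrow> b \<notin> fn_pre \<alpha> \<Longrightarrow> swap_pre a b \<alpha> = \<alpha>"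
  by (cases \<alpha>) (auto simp: swap_name_def)

lemma fn_pre_swap_pre [simp]: "fn_pre (swap_pre a b \<alpha>) = swap_name a b ` fn_pre \<alpha>"
  by (cases \<alpha>) auto

lemma fn_swap:
  "fn_proc (swap_proc a b P) = swap_name a b ` fn_proc P"
  "fn_sm (swap_sm a b M) = swap_name a b ` fn_sm M"
  by (induction P and M rule: proc.induct sm.induct) (auto simp: image_Un image_set_diff)

lemma bn_swap:
  "bn_proc (swap_proc a b P) = swap_name a b ` bn_proc P"
  "bn_sm (swap_sm a b M) = swap_name a b ` bn_sm M"
  by (induction P and M rule: proc.induct sm.induct) (auto simp: image_Un)

lemma finite_fn: "finite (fn_proc P)" "finite (fn_sm M)"
proof (induction P and M rule: proc.induct sm.induct)
  case (Pref \<alpha> P)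
  then show ?case by (cases \<alpha>) auto
qed auto

lemma finite_bn: "finite (bn_proc P)" "finite (bn_sm M)"
  by (induction P and M rule: proc.induct sm.induct) auto

lemma subst_pure:
  "pure_proc P \<Longrightarrow> subst_proc X S P = P" "pure_sm M \<Longrightarrow> subst_sm X S M = M"
  by (induction P and M rule: proc.induct sm.induct) auto

lemma ccs_trans_Pref_iff [simp]:
  "ccs_trans (Sum (Pref \<alpha> P)) \<beta> P' \<longleftrightarrow> \<beta> = \<alpha> \<and> P' = P"
  by (auto elim: ccs_trans.cases intro: ccs_trans.intros)

lemma ccs_trans_Plus_iff [simp]:
  "ccs_trans (Sum (Plus M N)) \<alpha> P' \<longleftrightarrow> ccs_trans (Sum M) \<alpha> P' \<or> ccs_trans (Sum N) \<alpha> P'"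
  by (auto elim: ccs_trans.cases intro: ccs_trans.intros)

lemma not_ccs_trans_Nil [simp]: "\<not> ccs_trans Nil \<alpha> P'"
  by (auto elim: ccs_trans.cases)

lemma ccs_trans_Res_iff [simp]:
  "ccs_trans (Res a P) \<alpha> R \<longleftrightarrow> (\<exists>P'. ccs_trans P \<alpha> P' \<and> a \<notin> fn_pre \<alpha> \<and> R = Res a P')"
  by (auto elim: ccs_trans.cases intro: ccs_trans.intros)

lemma ccs_trans_Par_iff:
  "ccs_trans (Par P Q) \<alpha> R \<longleftrightarrow>
     (\<exists>P'. ccs_trans P \<alpha> P' \<and> R = Par P' Q) \<or> (\<exists>Q'. ccs_trans Q \<alpha> Q' \<and> R = Par P Q') \<or>
     (\<alpha> = Tau \<and> (\<exists>a P' Q'. (ccs_trans P (In a) P' \<and> ccs_trans Q (Out a) Q' \<or>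
                         ccs_trans P (Out a) P' \<and> ccs_trans Q (In a) Q') \<and> R = Par P' Q'))"
  by (rule iffI, erule ccs_trans.cases) (auto intro: ccs_trans.intros)

lemma ccs_trans_ParE:
  assumes "ccs_trans (Par P Q) \<alpha> R"
  obtains (left) P' where "ccs_trans P \<alpha> P'" "R = Par P' Q"
    | (right) Q' where "ccs_trans Q \<alpha> Q'" "R = Par P Q'"
    | (comL) a P' Q' where "\<alpha> = Tau" "ccs_trans P (In a) P'" "ccs_trans Q (Out a) Q'" "R = Par P' Q'"
    | (comR) a P' Q' where "\<alpha> = Tau" "ccs_trans P (Out a) P'" "ccs_trans Q (In a) Q'" "R = Par P' Q'"
  using assms unfolding ccs_trans_Par_iff by blast

lemma ccs_trans_fn: "ccs_trans P \<alpha> P' \<Longrightarrow> fn_pre \<alpha> \<subseteq> fn_proc P \<and> fn_proc P' \<subseteq> fn_proc P"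
  by (induction rule: ccs_trans.induct) auto

lemma ccs_trans_pure: "ccs_trans P \<alpha> P' \<Longrightarrow> pure_proc P \<Longrightarrow> pure_proc P'"
  by (induction rule: ccs_trans.induct) auto

lemma ccs_trans_swap:
  "ccs_trans P \<alpha> P' \<Longrightarrow> ccs_trans (swap_proc a b P) (swap_pre a b \<alpha>) (swap_proc a b P')"
proof (induction rule: ccs_trans.induct)
  case (t_res P \<alpha> P' c)
  then show ?case by (auto simp: image_iff)
qed (auto intro: ccs_trans.intros)

section \<open>Structural congruence is a strong bisimulation up to itself\<close>

lemmas [trans] = sc_trans ss_trans

lemma scong_pure_fn:
  "scong P Q \<Longrightarrow> pure_proc P = pure_proc Q \<and> fn_proc P = fn_proc Q"
  "scong_sm M N \<Longrightarrow> pure_sm M = pure_sm N \<and> fn_sm M = fn_sm N"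
proof (induction rule: scong_scong_sm.inducts)
  case (sc_alpha b P a)
  then show ?case by (auto simp: fn_swap swap_name_def image_iff split: if_splits)
qed auto

lemma scong_fn: "scong P Q \<Longrightarrow> fn_proc P = fn_proc Q"
  and scong_pure: "scong P Q \<Longrightarrow> pure_proc P = pure_proc Q"
  using scong_pure_fn(1) by blast+

definition sim_upto_scong :: "proc \<Rightarrow> proc \<Rightarrow> bool" where
  "sim_upto_scong P Q \<longleftrightarrow> (\<forall>\<alpha> P'. ccs_trans P \<alpha> P' \<longrightarrow> (\<exists>Q'. ccs_trans Q \<alpha> Q' \<and> scong P' Q'))"

lemma sim_upto_scongI:
  "(\<And>\<alpha> P'. ccs_trans P \<alpha> P' \<Longrightarrow> \<exists>Q'. ccs_trans Q \<alpha> Q' \<and> scong P' Q') \<Longrightarrow> sim_upto_scong P Q"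
  unfolding sim_upto_scong_def by blast

lemma sim_upto_scong_if_trans:
  "(\<And>\<alpha> P'. ccs_trans P \<alpha> P' \<Longrightarrow> ccs_trans Q \<alpha> P') \<Longrightarrow> sim_upto_scong P Q"
  unfolding sim_upto_scong_def by (blast intro: sc_refl)

lemma sim_upto_scong_trans: "sim_upto_scong P Q \<Longrightarrow> sim_upto_scong Q R \<Longrightarrow> sim_upto_scong P R"
  unfolding sim_upto_scong_def by (meson sc_trans)

lemma sim_upto_scong_Par:
  assumes "scong P P'" "scong Q Q'" "sim_upto_scong P P'" "sim_upto_scong Q Q'"
  shows "sim_upto_scong (Par P Q) (Par P' Q')"
proof (rule sim_upto_scongI)
  fix \<alpha> R
  assume "ccs_trans (Par P Q) \<alpha> R"
  then show "\<exists>R'. ccs_trans (Par P' Q') \<alpha> R' \<and> scong R R'"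
  proof (cases rule: ccs_trans_ParE)
    case (left P1)
    then obtain P2 where "ccs_trans P' \<alpha> P2" "scong P1 P2"
      using assms(3) unfolding sim_upto_scong_def by blast
    with left assms(2) show ?thesis by (blast intro: ccs_trans.intros sc_par)
  next
    case (right Q1)
    then obtain Q2 where "ccs_trans Q' \<alpha> Q2" "scong Q1 Q2"
      using assms(4) unfolding sim_upto_scong_def by blast
    with right assms(1) show ?thesis by (blast intro: ccs_trans.intros sc_par)
  next
    case (comL a P1 Q1)
    then obtain P2 Q2 where "ccs_trans P' (In a) P2" "scong P1 P2" "ccs_trans Q' (Out a) Q2" "scong Q1 Q2"
      using assms(3,4) unfolding sim_upto_scong_def by meson
    with comL show ?thesis by (blast intro: ccs_trans.intros sc_par)
  next
    case (comR a P1 Q1)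
    then obtain P2 Q2 where "ccs_trans P' (Out a) P2" "scong P1 P2" "ccs_trans Q' (In a) Q2" "scong Q1 Q2"
      using assms(3,4) unfolding sim_upto_scong_def by meson
    with comR show ?thesis by (blast intro: ccs_trans.intros sc_par)
  qed
qed

lemma sim_upto_scong_Res:
  assumes "sim_upto_scong P Q"
  shows "sim_upto_scong (Res a P) (Res a Q)"
proof (rule sim_upto_scongI)
  fix \<alpha> R
  assume "ccs_trans (Res a P) \<alpha> R"
  then obtain P' where P': "ccs_trans P \<alpha> P'" "a \<notin> fn_pre \<alpha>" "R = Res a P'" by auto
  with assms obtain Q' where "ccs_trans Q \<alpha> Q'" "scong P' Q'"
    unfolding sim_upto_scong_def by blast
  with P' show "\<exists>R'. ccs_trans (Res a Q) \<alpha> R' \<and> scong R R'"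
    by (intro exI[of _ "Res a Q'"]) (simp add: sc_res)
qed

lemma sim_upto_scong_Par_comm: "sim_upto_scong (Par P Q) (Par Q P)"
proof (rule sim_upto_scongI)
  fix \<alpha> R
  assume "ccs_trans (Par P Q) \<alpha> R"
  then show "\<exists>R'. ccs_trans (Par Q P) \<alpha> R' \<and> scong R R'"
  proof (cases rule: ccs_trans_ParE)
    case (left P')
    then show ?thesis by (intro exI[of _ "Par Q P'"]) (simp add: ccs_trans.t_parR sc_par_comm)
  next
    case (right Q')
    then show ?thesis by (intro exI[of _ "Par Q' P"]) (simp add: ccs_trans.t_parL sc_par_comm)
  next
    case (comL a P' Q')
    then show ?thesis by (intro exI[of _ "Par Q' P'"]) (simp add: ccs_trans.t_comR sc_par_comm)
  next
    case (comR a P' Q')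
    then show ?thesis by (intro exI[of _ "Par Q' P'"]) (simp add: ccs_trans.t_comL sc_par_comm)
  qed
qed

lemma sim_upto_scong_Par_Nil:
  "sim_upto_scong (Par P Nil) P" "sim_upto_scong P (Par P Nil)"
  by (rule sim_upto_scongI, erule ccs_trans_ParE; force intro: sc_par_nil)
    (rule sim_upto_scongI, blast intro: ccs_trans.t_parL sc_sym[OF sc_par_nil])

lemma sim_upto_scong_Res_comm: "sim_upto_scong (Res a (Res b P)) (Res b (Res a P))"
proof (rule sim_upto_scongI)
  fix \<alpha> R
  assume "ccs_trans (Res a (Res b P)) \<alpha> R"
  then obtain P' where "ccs_trans P \<alpha> P'" "a \<notin> fn_pre \<alpha>" "b \<notin> fn_pre \<alpha>" "R = Res a (Res b P')"
    by auto
  then show "\<exists>R'. ccs_trans (Res b (Res a P)) \<alpha> R' \<and> scong R R'"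
    by (intro exI[of _ "Res b (Res a P')"]) (simp add: sc_res_comm)
qed

lemma sim_upto_scong_Par_assoc:
  "sim_upto_scong (Par (Par P Q) R) (Par P (Par Q R))"
  "sim_upto_scong (Par P (Par Q R)) (Par (Par P Q) R)"
  by (rule sim_upto_scongI; erule ccs_trans_ParE; (erule ccs_trans_ParE)?;
      fastforce intro: ccs_trans.intros sc_par_assoc sc_sym)+

lemma sim_upto_scong_res_Par:
  assumes "a \<notin> fn_proc P"
  shows "sim_upto_scong (Par P (Res a Q)) (Res a (Par P Q))"
    and "sim_upto_scong (Res a (Par P Q)) (Par P (Res a Q))"
proof -
  have fresh: "a \<notin> fn_pre \<alpha>" "a \<notin> fn_proc P'" if "ccs_trans P \<alpha> P'" for \<alpha> P'
    using ccs_trans_fn[OF that] assms by blast+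
  have extr: "scong (Par P' (Res a Q')) (Res a (Par P' Q'))" if "ccs_trans P \<alpha> P'" for \<alpha> P' Q'
    using fresh(2)[OF that] by (rule sc_res_par)
  show "sim_upto_scong (Par P (Res a Q)) (Res a (Par P Q))"
  proof (rule sim_upto_scongI)
    fix \<alpha> R
    assume "ccs_trans (Par P (Res a Q)) \<alpha> R"
    then show "\<exists>R'. ccs_trans (Res a (Par P Q)) \<alpha> R' \<and> scong R R'"
    proof (cases rule: ccs_trans_ParE)
      case (left P')
      then show ?thesis using fresh[OF left(1)] extr[OF left(1)] by (auto intro: ccs_trans.intros)
    next
      case (right Q')
      then show ?thesis using assms by (auto intro: ccs_trans.intros sc_res_par)
    next
      case (comL b P' Q')
      then show ?thesis using fresh[OF comL(2)] extr[OF comL(2)] by (auto intro: ccs_trans.intros)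
    next
      case (comR b P' Q')
      then show ?thesis using fresh[OF comR(2)] extr[OF comR(2)] by (auto intro: ccs_trans.intros)
    qed
  qed
  show "sim_upto_scong (Res a (Par P Q)) (Par P (Res a Q))"
  proof (rule sim_upto_scongI)
    fix \<alpha> R
    assume "ccs_trans (Res a (Par P Q)) \<alpha> R"
    then obtain R0 where R0: "ccs_trans (Par P Q) \<alpha> R0" "a \<notin> fn_pre \<alpha>" "R = Res a R0" by auto
    from R0(1) show "\<exists>R'. ccs_trans (Par P (Res a Q)) \<alpha> R' \<and> scong R R'"
    proof (cases rule: ccs_trans_ParE)
      case (left P')
      then show ?thesis using R0 extr[OF left(1)] by (auto intro: ccs_trans.intros sc_sym)
    next
      case (right Q')
      then show ?thesis using R0 assms by (auto intro: ccs_trans.intros sc_sym[OF sc_res_par])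
    next
      case (comL b P' Q')
      then show ?thesis using R0 fresh[OF comL(2)] extr[OF comL(2)]
        by (intro exI[of _ "Par P' (Res a Q')"]) (auto intro: ccs_trans.intros sc_sym)
    next
      case (comR b P' Q')
      then show ?thesis using R0 fresh[OF comR(2)] extr[OF comR(2)]
        by (intro exI[of _ "Par P' (Res a Q')"]) (auto intro: ccs_trans.intros sc_sym)
    qed
  qed
qed

lemma sim_upto_scong_alpha:
  assumes b: "b \<notin> fn_proc P"
  shows "sim_upto_scong (Res a P) (Res b (swap_proc a b P))"
    and "sim_upto_scong (Res b (swap_proc a b P)) (Res a P)"
proof -
  show "sim_upto_scong (Res a P) (Res b (swap_proc a b P))"
  proof (rule sim_upto_scongI)
    fix \<alpha> R
    assume "ccs_trans (Res a P) \<alpha> R"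
    then obtain P' where t: "ccs_trans P \<alpha> P'" "a \<notin> fn_pre \<alpha>" "R = Res a P'" by auto
    have "b \<notin> fn_pre \<alpha>" "b \<notin> fn_proc P'" using t b ccs_trans_fn by blast+
    with t have "ccs_trans (swap_proc a b P) \<alpha> (swap_proc a b P')"
      using ccs_trans_swap[OF t(1), of a b] swap_pre_fresh by metis
    moreover have "scong R (Res b (swap_proc a b P'))"
      using t \<open>b \<notin> fn_proc P'\<close> by (simp add: sc_alpha)
    ultimately show "\<exists>R'. ccs_trans (Res b (swap_proc a b P)) \<alpha> R' \<and> scong R R'"
      using \<open>b \<notin> fn_pre \<alpha>\<close> by auto
  qed
  show "sim_upto_scong (Res b (swap_proc a b P)) (Res a P)"
  proof (rule sim_upto_scongI)
    fix \<alpha> R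
    assume "ccs_trans (Res b (swap_proc a b P)) \<alpha> R"
    then obtain P' where t: "ccs_trans (swap_proc a b P) \<alpha> P'" "b \<notin> fn_pre \<alpha>" "R = Res b P'"
      by auto
    have t': "ccs_trans P (swap_pre a b \<alpha>) (swap_proc a b P')"
      using ccs_trans_swap[OF t(1), of a b] by simp
    have fn': "fn_pre (swap_pre a b \<alpha>) \<subseteq> fn_proc P" "fn_proc (swap_proc a b P') \<subseteq> fn_proc P"
      using ccs_trans_fn[OF t'] by auto
    have "swap_pre a b \<alpha> = \<alpha>"
      using fn'(1) b t(2) by (intro swap_pre_fresh) (auto simp: swap_name_def image_iff)
    moreover have "a \<notin> fn_pre \<alpha>" "a \<notin> fn_proc P'"
      using fn' b t(2) by (auto simp: fn_swap swap_name_def image_iff)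
    moreover have "scong (Res a (swap_proc a b P')) R"
      using sc_alpha[of b "swap_proc a b P'" a] fn' b t(3) by auto
    ultimately show "\<exists>R'. ccs_trans (Res a P) \<alpha> R' \<and> scong R R'"
      using t' by (metis ccs_trans_Res_iff sc_sym)
  qed
qed

lemma scong_sim_upto_scong:
  "scong P Q \<Longrightarrow> sim_upto_scong P Q \<and> sim_upto_scong Q P"
  "scong_sm M N \<Longrightarrow> sim_upto_scong (Sum M) (Sum N) \<and> sim_upto_scong (Sum N) (Sum M)"
proof (induction rule: scong_scong_sm.inducts)
  case (sc_sym P Q)
  then show ?case by blast
next
  case (ss_sym M N)
  then show ?case by blast
next
  case (sc_sum M N)
  then show ?case by blast
next
  case (sc_trans P Q R)
  then show ?case by (meson sim_upto_scong_trans)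
next
  case (ss_trans M N K)
  then show ?case by (meson sim_upto_scong_trans)
next
  case (sc_par P P' Q Q')
  then show ?case using sim_upto_scong_Par sc_sym by blast
next
  case (sc_res P Q a)
  then show ?case using sim_upto_scong_Res by blast
next
  case (sc_par_assoc P Q R)
  then show ?case using sim_upto_scong_Par_assoc by blast
next
  case (sc_res_par a P Q)
  then show ?case using sim_upto_scong_res_Par by blast
next
  case (sc_alpha b P a)
  then show ?case using sim_upto_scong_alpha by blast
next
  case (ss_pref P Q \<alpha>)
  then show ?case unfolding sim_upto_scong_def using sc_sym[OF ss_pref.hyps] by auto
next
  case (sc_par_comm P Q)
  show ?case using sim_upto_scong_Par_comm by blast
next
  case (sc_par_nil P)
  show ?case using sim_upto_scong_Par_Nil by blast
next
  case (sc_res_comm a b P)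
  show ?case using sim_upto_scong_Res_comm by blast
next
  case (ss_plus M M' N N')
  then show ?case unfolding sim_upto_scong_def ccs_trans_Plus_iff by meson
next
  case (sc_res_nil a)
  show ?case by (simp add: sim_upto_scong_def)
qed (intro conjI sim_upto_scong_if_trans; auto)+

lemma ccs_trans_scong:
  "scong P Q \<Longrightarrow> ccs_trans P \<alpha> P' \<Longrightarrow> \<exists>Q'. ccs_trans Q \<alpha> Q' \<and> scong P' Q'"
  using scong_sim_upto_scong(1) unfolding sim_upto_scong_def by blast

section \<open>Standard forms of visible transitions\<close>

lemma fn_resL [simp]: "fn_proc (resL A P) = fn_proc P - set A"
  by (induction A) auto

lemma bn_resL [simp]: "bn_proc (resL A P) = set A \<union> bn_proc P"
  by (induction A) auto

lemma pure_resL [simp]: "pure_proc (resL A P) = pure_proc P"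
  by (induction A) auto

lemma subst_resL [simp]: "subst_proc X S (resL A P) = resL A (subst_proc X S P)"
  by (induction A) auto

lemma swap_resL:
  "a \<notin> set A \<Longrightarrow> b \<notin> set A \<Longrightarrow> swap_proc a b (resL A P) = resL A (swap_proc a b P)"
  by (induction A) (auto simp: swap_name_def)

lemma scong_resL: "scong P Q \<Longrightarrow> scong (resL A P) (resL A Q)"
  by (induction A) (auto intro: sc_res)

lemma ccs_trans_resL:
  "ccs_trans P \<alpha> P' \<Longrightarrow> set A \<inter> fn_pre \<alpha> = {} \<Longrightarrow> ccs_trans (resL A P) \<alpha> (resL A P')"
  by (induction A) auto

lemma red_resL: "red P Q \<Longrightarrow> red (resL A P) (resL A Q)"
  by (induction A) (auto intro: red_res)

lemma scong_resL_Par_right: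
  "set A \<inter> fn_proc P = {} \<Longrightarrow> scong (Par P (resL A Q)) (resL A (Par P Q))"
proof (induction A)
  case Nil
  show ?case by (simp add: sc_refl)
next
  case (Cons a A)
  then have "scong (Par P (Res a (resL A Q))) (Res a (Par P (resL A Q)))"
    by (intro sc_res_par) auto
  also have "scong \<dots> (Res a (resL A (Par P Q)))"
    using Cons by (auto intro: sc_res)
  finally show ?case by simp
qed

lemma scong_resL_Par_left:
  "set A \<inter> fn_proc Q = {} \<Longrightarrow> scong (Par (resL A P) Q) (resL A (Par P Q))"
proof -
  assume fresh: "set A \<inter> fn_proc Q = {}"
  have "scong (Par (resL A P) Q) (Par Q (resL A P))" by (rule sc_par_comm)
  also have "scong \<dots> (resL A (Par Q P))" using fresh by (rule scong_resL_Par_right)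
  also have "scong \<dots> (resL A (Par P Q))" by (intro scong_resL sc_par_comm)
  finally show ?thesis .
qed

lemma scong_Par_interchange: "scong (Par (Par P Q) (Par R S)) (Par (Par P R) (Par Q S))"
proof -
  have "scong (Par (Par P Q) (Par R S)) (Par P (Par Q (Par R S)))" by (rule sc_par_assoc)
  also have "scong \<dots> (Par P (Par (Par Q R) S))" by (intro sc_par sc_refl sc_sym[OF sc_par_assoc])
  also have "scong \<dots> (Par P (Par (Par R Q) S))" by (intro sc_par sc_refl sc_par_comm)
  also have "scong \<dots> (Par P (Par R (Par Q S)))" by (intro sc_par sc_refl sc_par_assoc)
  also have "scong \<dots> (Par (Par P R) (Par Q S))" by (rule sc_sym[OF sc_par_assoc])
  finally show ?thesis .
qed

lemma ccs_trans_Sum_summand: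
  "ccs_trans (Sum M) \<alpha> P' \<Longrightarrow> \<exists>N. scong_sm M (Plus (Pref \<alpha> P') N)"
proof (induction "Sum M" \<alpha> P' arbitrary: M rule: ccs_trans.induct)
  case (t_pref \<alpha> P)
  then show ?case using ss_sym[OF ss_zero] by auto
next
  case (t_sumL M1 \<alpha> P' M2)
  then obtain N where "scong_sm M1 (Plus (Pref \<alpha> P') N)" by blast
  then have "scong_sm (Plus M1 M2) (Plus (Plus (Pref \<alpha> P') N) M2)" by (intro ss_plus ss_refl)
  also have "scong_sm \<dots> (Plus (Pref \<alpha> P') (Plus N M2))" by (rule ss_assoc)
  finally show ?case by auto
next
  case (t_sumR M2 \<alpha> P' M1)
  then obtain N where "scong_sm M2 (Plus (Pref \<alpha> P') N)" by blast
  then have "scong_sm (Plus M1 M2) (Plus M1 (Plus (Pref \<alpha> P') N))" by (intro ss_plus ss_refl)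
  also have "scong_sm \<dots> (Plus (Plus (Pref \<alpha> P') N) M1)" by (rule ss_comm)
  also have "scong_sm \<dots> (Plus (Pref \<alpha> P') (Plus N M1))" by (rule ss_assoc)
  finally show ?case by auto
qed

text \<open>The shape \<open>(\<nu>A)(\<alpha>.Q + M | R)\<close> of the rules Rcv and Snd of the context LTS.\<close>

abbreviation exposed :: "name list \<Rightarrow> pre \<Rightarrow> proc \<Rightarrow> sm \<Rightarrow> proc \<Rightarrow> proc" where
  "exposed A \<alpha> Q M R \<equiv> resL A (Par (Sum (Plus (Pref \<alpha> Q) M)) R)"

lemma ccs_trans_exposed:
  assumes "set A \<inter> fn_pre \<alpha> = {}" "scong P (exposed A \<alpha> Q M R)"
  shows "\<exists>P'. ccs_trans P \<alpha> P' \<and> scong P' (resL A (Par Q R))"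
proof -
  have "ccs_trans (exposed A \<alpha> Q M R) \<alpha> (resL A (Par Q R))"
    using assms(1) by (intro ccs_trans_resL ccs_trans.t_parL ccs_trans.t_sumL ccs_trans.t_pref)
  then show ?thesis using ccs_trans_scong[OF sc_sym[OF assms(2)]] by (blast intro: sc_sym)
qed

lemma scong_Sum_exposed:
  assumes "ccs_trans (Sum M) \<alpha> P'"
  shows "\<exists>N. scong (Sum M) (exposed [] \<alpha> P' N Nil)"
proof -
  obtain N where "scong_sm M (Plus (Pref \<alpha> P') N)"
    using ccs_trans_Sum_summand[OF assms] by blast
  then have "scong (Sum M) (Sum (Plus (Pref \<alpha> P') N))" by (rule sc_sum)
  also have "scong \<dots> (Par (Sum (Plus (Pref \<alpha> P') N)) Nil)" by (rule sc_sym[OF sc_par_nil])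
  finally show ?thesis by auto
qed

lemma scong_resL_Par_assoc:
  "set A \<inter> fn_proc S = {} \<Longrightarrow> scong (Par (resL A (Par P R)) S) (resL A (Par P (Par R S)))"
  by (rule sc_trans[OF scong_resL_Par_left scong_resL[OF sc_par_assoc]])

lemma scong_Res_exposed:
  assumes P: "scong P (exposed A \<alpha> Q M R)" and P': "scong P' (resL A (Par Q R))"
    and "c \<notin> fn_pre \<alpha>" "fn_pre \<alpha> \<subseteq> fn_proc P" "fn_proc P' \<subseteq> fn_proc P"
    and c': "c' \<notin> fn_proc P" and A: "c \<notin> set A" "c' \<notin> set A"
  shows "scong (Res c P) (exposed (c' # A) \<alpha> (swap_proc c c' Q) (swap_sm c c' M) (swap_proc c c' R))"
    and "scong (Res c P') (resL (c' # A) (Par (swap_proc c c' Q) (swap_proc c c' R)))"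
proof -
  have swap_\<alpha>: "swap_pre c c' \<alpha> = \<alpha>"
    using assms(3,4) c' by (intro swap_pre_fresh) auto
  have "scong (Res c P) (Res c (exposed A \<alpha> Q M R))" using P by (rule sc_res)
  also have "scong \<dots> (Res c' (swap_proc c c' (exposed A \<alpha> Q M R)))"
    using c' scong_fn[OF P] by (intro sc_alpha) simp
  finally show "scong (Res c P)
      (exposed (c' # A) \<alpha> (swap_proc c c' Q) (swap_sm c c' M) (swap_proc c c' R))"
    using A swap_\<alpha> by (simp add: swap_resL)
  have "scong (Res c P') (Res c (resL A (Par Q R)))" using P' by (rule sc_res)
  also have "scong \<dots> (Res c' (swap_proc c c' (resL A (Par Q R))))"
    using c' assms(5) scong_fn[OF P'] by (intro sc_alpha) auto
  finally show "scong (Res c P') (resL (c' # A) (Par (swap_proc c c' Q) (swap_proc c c' R)))"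
    using A by (simp add: swap_resL)
qed

lemma ccs_trans_visible_exposed:
  assumes "ccs_trans P \<alpha> P'" "\<alpha> \<noteq> Tau" "finite F"
  shows "\<exists>A Q M R. scong P (exposed A \<alpha> Q M R) \<and> set A \<inter> (F \<union> fn_pre \<alpha>) = {} \<and>
    scong P' (resL A (Par Q R))"
  using assms
proof (induction arbitrary: F rule: ccs_trans.induct)
  case (t_pref \<alpha> P)
  then show ?case using scong_Sum_exposed[of "Pref \<alpha> P" \<alpha> P] sc_sym[OF sc_par_nil] by fastforce
next
  case (t_sumL M \<alpha> P' N)
  then have "ccs_trans (Sum (Plus M N)) \<alpha> P'" by simp
  then show ?case using scong_Sum_exposed sc_sym[OF sc_par_nil] by fastforce
next
  case (t_sumR N \<alpha> P' M)
  then have "ccs_trans (Sum (Plus M N)) \<alpha> P'" by simp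
  then show ?case using scong_Sum_exposed sc_sym[OF sc_par_nil] by fastforce
next
  case (t_parL P \<alpha> P' S)
  then obtain A Q M R where A: "scong P (exposed A \<alpha> Q M R)"
    "set A \<inter> ((F \<union> fn_proc S) \<union> fn_pre \<alpha>) = {}" "scong P' (resL A (Par Q R))"
    using finite_fn(1) by (metis finite_UnI)
  then have "set A \<inter> fn_proc S = {}" by blast
  then have "scong (Par P S) (exposed A \<alpha> Q M (Par R S))"
    and "scong (Par P' S) (resL A (Par Q (Par R S)))"
    using A by (blast intro: sc_trans[OF sc_par[OF _ sc_refl] scong_resL_Par_assoc])+
  with A show ?case by blast
next
  case (t_parR S \<alpha> P' P)
  then obtain A Q M R where A: "scong S (exposed A \<alpha> Q M R)"
    "set A \<inter> ((F \<union> fn_proc P) \<union> fn_pre \<alpha>) = {}" "scong P' (resL A (Par Q R))"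
    using finite_fn(1) by (metis finite_UnI)
  then have "set A \<inter> fn_proc P = {}" by blast
  then have "scong (Par P S) (exposed A \<alpha> Q M (Par R P))"
    and "scong (Par P P') (resL A (Par Q (Par R P)))"
    using A by (blast intro: sc_trans[OF sc_par_comm sc_trans[OF sc_par[OF _ sc_refl] scong_resL_Par_assoc]])+
  with A show ?case by blast
next
  case (t_res P \<alpha> P' c)
  have "finite (F \<union> fn_proc P \<union> {c})" using t_res.prems by (simp add: finite_fn)
  from ex_new_if_finite[OF infinite_UNIV_nat this] obtain c' where c': "c' \<notin> F \<union> fn_proc P \<union> {c}" ..
  obtain A Q M R where A: "scong P (exposed A \<alpha> Q M R)"
    "set A \<inter> ((F \<union> {c, c'}) \<union> fn_pre \<alpha>) = {}" "scong P' (resL A (Par Q R))"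
    using t_res.IH[of "F \<union> {c, c'}"] t_res.prems by auto
  have fn: "fn_pre \<alpha> \<subseteq> fn_proc P" "fn_proc P' \<subseteq> fn_proc P"
    using ccs_trans_fn[OF t_res.hyps(1)] by blast+
  have "c' \<notin> fn_proc P" "c \<notin> set A" "c' \<notin> set A" using c' A(2) by auto
  moreover have "set (c' # A) \<inter> (F \<union> fn_pre \<alpha>) = {}" using A(2) c' fn by auto
  ultimately show ?case using scong_Res_exposed[OF A(1,3) t_res.hyps(2) fn] by blast
qed auto

lemma scong_fresh_bn:
  "finite F \<Longrightarrow> \<exists>P'. scong P P' \<and> bn_proc P' \<inter> F = {}"
  "finite F \<Longrightarrow> \<exists>M'. scong_sm M M' \<and> bn_sm M' \<inter> F = {}"
proof (induction P and M rule: proc.induct sm.induct)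
  case (Sum M)
  then obtain M' where "scong_sm M M'" "bn_sm M' \<inter> F = {}" by blast
  then show ?case by (intro exI[of _ "Sum M'"]) (simp add: sc_sum)
next
  case (Par P Q)
  then obtain P' Q' where "scong P P'" "bn_proc P' \<inter> F = {}" "scong Q Q'" "bn_proc Q' \<inter> F = {}"
    by blast
  then show ?case by (intro exI[of _ "Par P' Q'"]) (simp add: sc_par Int_Un_distrib2)
next
  case (Res c P)
  then obtain P' where P': "scong P P'" "bn_proc P' \<inter> F = {}" by blast
  have "finite (F \<union> fn_proc P' \<union> bn_proc P')" using Res.prems by (simp add: finite_fn finite_bn)
  then have "\<exists>c'. c' \<notin> F \<union> fn_proc P' \<union> bn_proc P'" by (rule ex_new_if_finite[OF infinite_UNIV_nat])
  then obtain c' where c': "c' \<notin> F \<union> fn_proc P' \<union> bn_proc P'" ..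
  have "scong (Res c P) (Res c P')" using P'(1) by (rule sc_res)
  also have "scong \<dots> (Res c' (swap_proc c c' P'))" using c' by (intro sc_alpha) simp
  finally have "scong (Res c P) (Res c' (swap_proc c c' P'))" .
  moreover have "swap_name c c' ` bn_proc P' \<subseteq> insert c' (bn_proc P')"
    using c' by (auto simp: swap_name_def)
  then have "bn_proc (Res c' (swap_proc c c' P')) \<inter> F = {}"
    using c' P'(2) by (auto simp: bn_swap)
  ultimately show ?case by blast
next
  case (Var X)
  show ?case by (intro exI[of _ "Var X"]) (simp add: sc_refl)
next
  case Zero
  show ?case by (intro exI[of _ Zero]) (simp add: ss_refl)
next
  case (Pref \<alpha> P)
  then obtain P' where "scong P P'" "bn_proc P' \<inter> F = {}" by blast
  then show ?case by (intro exI[of _ "Pref \<alpha> P'"]) (simp add: ss_pref)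
next
  case (Plus M N)
  then obtain M' N' where "scong_sm M M'" "bn_sm M' \<inter> F = {}" "scong_sm N N'" "bn_sm N' \<inter> F = {}"
    by blast
  then show ?case by (intro exI[of _ "Plus M' N'"]) (simp add: ss_plus Int_Un_distrib2)
qed

section \<open>Reductions are the silent transitions\<close>

lemma communication_red:
  assumes P: "ccs_trans P (In a) P1" and Q: "ccs_trans Q (Out a) Q1"
  shows "red (Par P Q) (Par P1 Q1)"
proof -
  obtain A Pa M R1 where A: "scong P (exposed A (In a) Pa M R1)"
    "set A \<inter> (fn_proc Q \<union> fn_pre (In a)) = {}" "scong P1 (resL A (Par Pa R1))"
    using ccs_trans_visible_exposed[OF P _ finite_fn(1)] by blast
  define S1 where "S1 = Sum (Plus (Pref (In a) Pa) M)"
  obtain B Qa N R2 where B: "scong Q (exposed B (Out a) Qa N R2)"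
    "set B \<inter> (fn_proc (Par S1 R1) \<union> fn_pre (Out a)) = {}" "scong Q1 (resL B (Par Qa R2))"
    using ccs_trans_visible_exposed[OF Q _ finite_fn(1)] by blast
  define S2 where "S2 = Sum (Plus (Pref (Out a) Qa) N)"
  have fn_Q: "fn_proc (resL B (Par S2 R2)) = fn_proc Q" "fn_proc (resL B (Par Qa R2)) \<subseteq> fn_proc Q"
    using scong_fn[OF B(1)] scong_fn[OF B(3)] ccs_trans_fn[OF Q] by (auto simp: S2_def)
  have "scong (Par P Q) (Par (resL A (Par S1 R1)) (resL B (Par S2 R2)))"
    using A(1) B(1) by (simp add: S1_def S2_def sc_par)
  also have "scong \<dots> (resL A (Par (Par S1 R1) (resL B (Par S2 R2))))"
    using A(2) fn_Q by (intro scong_resL_Par_left) auto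
  also have "scong \<dots> (resL A (resL B (Par (Par S1 R1) (Par S2 R2))))"
    using B(2) by (intro scong_resL scong_resL_Par_right) auto
  also have "scong \<dots> (resL A (resL B (Par (Par S1 S2) (Par R1 R2))))"
    by (intro scong_resL scong_Par_interchange)
  finally have before: "scong (Par P Q) (resL A (resL B (Par (Par S1 S2) (Par R1 R2))))" .
  have step: "red (resL A (resL B (Par (Par S1 S2) (Par R1 R2))))
      (resL A (resL B (Par (Par Pa Qa) (Par R1 R2))))"
    unfolding S1_def S2_def by (intro red_resL red_par red_com)
  have "scong (resL A (resL B (Par (Par Pa Qa) (Par R1 R2))))
      (resL A (resL B (Par (Par Pa R1) (Par Qa R2))))"
    by (intro scong_resL scong_Par_interchange)
  also have "scong \<dots> (resL A (Par (Par Pa R1) (resL B (Par Qa R2))))"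
    using B(2) by (intro scong_resL sc_sym[OF scong_resL_Par_right]) (auto simp: S1_def)
  also have "scong \<dots> (Par (resL A (Par Pa R1)) (resL B (Par Qa R2)))"
    using A(2) fn_Q by (intro sc_sym[OF scong_resL_Par_left]) auto
  also have "scong \<dots> (Par P1 Q1)" by (rule sc_par[OF sc_sym[OF A(3)] sc_sym[OF B(3)]])
  finally show ?thesis by (rule red_struct[OF before step])
qed

lemma ccs_trans_Tau_red: "ccs_trans P Tau P' \<Longrightarrow> red P P'"
proof (induction P "Tau" P' rule: ccs_trans.induct)
  case (t_pref P)
  show ?case
    by (rule red_struct[OF sc_sum[OF ss_sym[OF ss_zero]] red_tau sc_refl])
next
  case (t_sumL M P' N)
  then obtain K where "scong_sm (Plus M N) (Plus (Pref Tau P') K)"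
    using ccs_trans_Sum_summand[of "Plus M N"] by auto
  then show ?case by (rule red_struct[OF sc_sum red_tau sc_refl])
next
  case (t_sumR N P' M)
  then obtain K where "scong_sm (Plus M N) (Plus (Pref Tau P') K)"
    using ccs_trans_Sum_summand[of "Plus M N"] by auto
  then show ?case by (rule red_struct[OF sc_sum red_tau sc_refl])
next
  case (t_parR Q Q' P)
  then have "red Q Q'" by simp
  then show ?case by (rule red_struct[OF sc_par_comm red_par sc_par_comm])
next
  case (t_comL P a P' Q Q')
  then show ?case by (rule communication_red)
next
  case (t_comR P a P' Q Q')
  show ?case by (rule red_struct[OF sc_par_comm communication_red[OF t_comR.hyps(2,1)] sc_par_comm])
qed (auto intro: red_par red_res)

lemma red_iff_ccs_trans_Tau: "red P P' \<longleftrightarrow> (\<exists>P''. ccs_trans P Tau P'' \<and> scong P'' P')"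
proof
  show "red P P'" if "\<exists>P''. ccs_trans P Tau P'' \<and> scong P'' P'"
    using that ccs_trans_Tau_red red_struct[OF sc_refl] by blast
  show "\<exists>P''. ccs_trans P Tau P'' \<and> scong P'' P'" if "red P P'"
    using that
  proof (induction rule: red.induct)
    case (red_com a P M Q N)
    then show ?case by (blast intro: ccs_trans.intros sc_refl)
  next
    case (red_tau P M)
    then show ?case by (blast intro: ccs_trans.intros sc_refl)
  next
    case (red_par P P' Q)
    then show ?case by (blast intro: ccs_trans.intros sc_par sc_refl)
  next
    case (red_res P P' a)
    then obtain P'' where "ccs_trans P Tau P''" "scong P'' P'" by blast
    then show ?case by (intro exI[of _ "Res a P''"]) (simp add: sc_res)
  next
    case (red_struct P Q Q' P')
    then obtain Q'' where "ccs_trans Q Tau Q''" "scong Q'' Q'" by blast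
    moreover obtain P'' where "ccs_trans P Tau P''" "scong Q'' P''"
      using ccs_trans_scong[OF sc_sym[OF red_struct.hyps(1)] calculation(1)] by blast
    ultimately show ?case using red_struct.hyps(3) by (meson sc_sym sc_trans)
  qed
qed

lemma red_pure: "red P P' \<Longrightarrow> pure_proc P \<Longrightarrow> pure_proc P'"
  using red_iff_ccs_trans_Tau ccs_trans_pure scong_pure by blast

lemma ccs_bisimilarI:
  assumes "Rel P Q" and "\<And>P Q. Rel P Q \<Longrightarrow> Rel Q P"
    and "\<And>P Q \<alpha> P'. Rel P Q \<Longrightarrow> ccs_trans P \<alpha> P' \<Longrightarrow> \<exists>Q'. ccs_trans Q \<alpha> Q' \<and> Rel P' Q'"
  shows "ccs_bisimilar P Q"
  unfolding ccs_bisimilar_def ccs_bisim_def using assms by (intro exI[of _ Rel]) blast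

lemma ccs_bisimilarD:
  "ccs_bisimilar P Q \<Longrightarrow> ccs_trans P \<alpha> P' \<Longrightarrow> \<exists>Q'. ccs_trans Q \<alpha> Q' \<and> ccs_bisimilar P' Q'"
  unfolding ccs_bisimilar_def ccs_bisim_def by blast

lemma ccs_bisimilar_sym: "ccs_bisimilar P Q \<Longrightarrow> ccs_bisimilar Q P"
proof -
  assume "ccs_bisimilar P Q"
  then obtain Rel where "ccs_bisim Rel" "Rel P Q" unfolding ccs_bisimilar_def by blast
  then have "ccs_bisim (\<lambda>x y. Rel y x)" "(\<lambda>x y. Rel y x) Q P" unfolding ccs_bisim_def by blast+
  then show ?thesis unfolding ccs_bisimilar_def by (intro exI[of _ "\<lambda>x y. Rel y x"] conjI)
qed

lemma ccs_bisimilar_trans: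
  assumes "ccs_bisimilar P Q" "ccs_bisimilar Q R"
  shows "ccs_bisimilar P R"
proof (rule ccs_bisimilarI[where Rel = "\<lambda>X Y. \<exists>Z. ccs_bisimilar X Z \<and> ccs_bisimilar Z Y"])
  show "\<exists>Z. ccs_bisimilar P Z \<and> ccs_bisimilar Z R" using assms by blast
next
  fix X Y
  assume "\<exists>Z. ccs_bisimilar X Z \<and> ccs_bisimilar Z Y"
  then obtain Z where "ccs_bisimilar X Z" "ccs_bisimilar Z Y" by blast
  with ccs_bisimilar_sym[OF this(1)] ccs_bisimilar_sym[OF this(2)]
  show "\<exists>Z. ccs_bisimilar Y Z \<and> ccs_bisimilar Z X" by blast
next
  fix X Y \<alpha> X'
  assume "\<exists>Z. ccs_bisimilar X Z \<and> ccs_bisimilar Z Y" and X': "ccs_trans X \<alpha> X'"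
  then obtain Z where XZ: "ccs_bisimilar X Z" and ZY: "ccs_bisimilar Z Y" by blast
  obtain Z' where "ccs_trans Z \<alpha> Z'" "ccs_bisimilar X' Z'" using ccs_bisimilarD[OF XZ X'] by blast
  moreover obtain Y' where "ccs_trans Y \<alpha> Y'" "ccs_bisimilar Z' Y'"
    using ccs_bisimilarD[OF ZY \<open>ccs_trans Z \<alpha> Z'\<close>] by blast
  ultimately show "\<exists>Y'. ccs_trans Y \<alpha> Y' \<and> (\<exists>Z. ccs_bisimilar X' Z \<and> ccs_bisimilar Z Y')" by blast
qed

lemma ccs_bisimilar_upto_scong:
  assumes "Rel P Q" and sym: "\<And>P Q. Rel P Q \<Longrightarrow> Rel Q P"
    and step: "\<And>P Q \<alpha> P'. Rel P Q \<Longrightarrow> ccs_trans P \<alpha> P' \<Longrightarrow>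
      \<exists>Q' P1 Q1. ccs_trans Q \<alpha> Q' \<and> scong P' P1 \<and> Rel P1 Q1 \<and> scong Q1 Q'"
  shows "ccs_bisimilar P Q"
proof (rule ccs_bisimilarI[where Rel = "\<lambda>P Q. \<exists>P0 Q0. scong P P0 \<and> Rel P0 Q0 \<and> scong Q0 Q"])
  show "\<exists>P0 Q0. scong P P0 \<and> Rel P0 Q0 \<and> scong Q0 Q"
    using sc_refl assms(1) by blast
next
  fix P Q
  assume "\<exists>P0 Q0. scong P P0 \<and> Rel P0 Q0 \<and> scong Q0 Q"
  then obtain P0 Q0 where "scong P P0" "Rel P0 Q0" "scong Q0 Q" by blast
  with sc_sym[OF this(1)] sc_sym[OF this(3)] sym[OF this(2)]
  show "\<exists>Q0 P0. scong Q Q0 \<and> Rel Q0 P0 \<and> scong P0 P" by blast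
next
  fix P Q \<alpha> P'
  assume "\<exists>P0 Q0. scong P P0 \<and> Rel P0 Q0 \<and> scong Q0 Q" and P': "ccs_trans P \<alpha> P'"
  then obtain P0 Q0 where P0: "scong P P0" and R: "Rel P0 Q0" and Q0: "scong Q0 Q" by blast
  obtain P0' where "ccs_trans P0 \<alpha> P0'" and P0': "scong P' P0'"
    using ccs_trans_scong[OF P0 P'] by blast
  then obtain Q0' P1 Q1 where
    "ccs_trans Q0 \<alpha> Q0'" and P1: "scong P0' P1" and "Rel P1 Q1" and Q1: "scong Q1 Q0'"
    using step[OF R] by blast
  moreover obtain Q' where "ccs_trans Q \<alpha> Q'" and Q0': "scong Q0' Q'"
    using ccs_trans_scong[OF Q0 \<open>ccs_trans Q0 \<alpha> Q0'\<close>] by blast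
  ultimately show "\<exists>Q'. ccs_trans Q \<alpha> Q' \<and> (\<exists>P0 Q0. scong P' P0 \<and> Rel P0 Q0 \<and> scong Q0 Q')"
    using sc_trans[OF P0' P1] sc_trans[OF Q1 Q0'] by blast
qed

lemma scong_ccs_bisimilar: "scong P Q \<Longrightarrow> ccs_bisimilar P Q"
  by (erule ccs_bisimilarI[OF _ sc_sym ccs_trans_scong])

lemma ccs_bisimilar_Par:
  assumes "ccs_bisimilar P Q"
  shows "ccs_bisimilar (Par P S) (Par Q S)"
proof (rule ccs_bisimilarI[where Rel = "\<lambda>X Y. \<exists>P Q S. X = Par P S \<and> Y = Par Q S \<and> ccs_bisimilar P Q"])
  fix X Y \<alpha> X'
  assume "\<exists>P Q S. X = Par P S \<and> Y = Par Q S \<and> ccs_bisimilar P Q" and "ccs_trans X \<alpha> X'"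
  then obtain P Q S where Y: "Y = Par Q S" and PQ: "ccs_bisimilar P Q"
    and T: "ccs_trans (Par P S) \<alpha> X'" by blast
  let ?Rel = "\<lambda>X Y. \<exists>P Q S. X = Par P S \<and> Y = Par Q S \<and> ccs_bisimilar P Q"
  from T show "\<exists>Y'. ccs_trans Y \<alpha> Y' \<and> ?Rel X' Y'"
  proof (cases rule: ccs_trans_ParE)
    case (left P')
    then obtain Q' where "ccs_trans Q \<alpha> Q'" "ccs_bisimilar P' Q'" using ccs_bisimilarD[OF PQ] by blast
    with left Y show ?thesis by (blast intro: ccs_trans.t_parL)
  next
    case (right S')
    with Y PQ show ?thesis by (blast intro: ccs_trans.t_parR)
  next
    case (comL a P' S')
    then obtain Q' where "ccs_trans Q (In a) Q'" "ccs_bisimilar P' Q'" using ccs_bisimilarD[OF PQ] by blast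
    with comL Y show ?thesis by (blast intro: ccs_trans.t_comL)
  next
    case (comR a P' S')
    then obtain Q' where "ccs_trans Q (Out a) Q'" "ccs_bisimilar P' Q'" using ccs_bisimilarD[OF PQ] by blast
    with comR Y show ?thesis by (blast intro: ccs_trans.t_comR)
  qed
next
  fix X Y
  assume "\<exists>P Q S. X = Par P S \<and> Y = Par Q S \<and> ccs_bisimilar P Q"
  then obtain P Q S where "X = Par P S" "Y = Par Q S" "ccs_bisimilar P Q" by blast
  with ccs_bisimilar_sym[OF this(3)]
  show "\<exists>P Q S. Y = Par P S \<and> X = Par Q S \<and> ccs_bisimilar P Q" by blast
qed (use assms in blast)

fun coname :: "pre \<Rightarrow> pre" where
  "coname (In a) = Out a"
| "coname (Out a) = In a"
| "coname Tau = Tau"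

lemma coname_eq_iff [simp]: "coname \<alpha> = coname \<beta> \<longleftrightarrow> \<alpha> = \<beta>"
  by (cases \<alpha>; cases \<beta>) auto

lemma ltsC_CHole_iff: "ltsC P CHole Q \<longleftrightarrow> red P Q"
  by (auto elim: ltsC.cases intro: ltsC.C_tau)

lemma ltsC_exposed:
  assumes "\<alpha> \<noteq> Tau" "scong P (exposed A \<alpha> Q M R)" "set A \<inter> fn_pre \<alpha> = {}"
  shows "ltsC P (CPar (Sum (Pref (coname \<alpha>) (Var 1)))) (resL A (Par (Par Q R) (Var 1)))"
proof (cases \<alpha>)
  case (In a)
  then show ?thesis using assms ltsC.C_rcv[of P A a Q M R] by simp
next
  case (Out a)
  then show ?thesis using assms ltsC.C_snd[of P A a Q M R] by simp
qed (use assms in simp)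

lemma ltsC_CPar_iff:
  "ltsC P (CPar T) Qe \<longleftrightarrow>
     (\<exists>\<alpha> A Q M R. \<alpha> \<noteq> Tau \<and> T = Sum (Pref (coname \<alpha>) (Var 1)) \<and>
        scong P (exposed A \<alpha> Q M R) \<and> set A \<inter> fn_pre \<alpha> = {} \<and>
        Qe = resL A (Par (Par Q R) (Var 1)))"
proof
  assume "ltsC P (CPar T) Qe"
  then show "\<exists>\<alpha> A Q M R. \<alpha> \<noteq> Tau \<and> T = Sum (Pref (coname \<alpha>) (Var 1)) \<and>
      scong P (exposed A \<alpha> Q M R) \<and> set A \<inter> fn_pre \<alpha> = {} \<and> Qe = resL A (Par (Par Q R) (Var 1))"
  proof cases
    case (C_rcv A a Q M R)
    then show ?thesis by (intro exI[of _ "In a"]) auto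
  next
    case (C_snd A a Q M R)
    then show ?thesis by (intro exI[of _ "Out a"]) auto
  qed
qed (blast intro: ltsC_exposed)

lemma ltsCI_CHole_iff: "ltsCI P CHole P' \<longleftrightarrow> pure_proc P \<and> red P P'"
proof
  assume "ltsCI P CHole P'"
  then obtain Ce Qe S where P: "pure_proc P" and "ltsC P Ce Qe" and Qe: "scong (subst_proc 1 S Qe) P'"
    and "subst_ctx 1 S Ce = CHole"
    unfolding ltsCI_def by blast
  then have "red P Qe" by (cases Ce) (simp_all add: ltsC_CHole_iff)
  moreover have "subst_proc 1 S Qe = Qe" using subst_pure(1) red_pure[OF calculation P] .
  ultimately show "pure_proc P \<and> red P P'" using P Qe by (auto intro: red_struct[OF sc_refl])
next
  assume "pure_proc P \<and> red P P'"
  then show "ltsCI P CHole P'"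
    unfolding ltsCI_def using red_pure subst_pure(1)
    by (intro conjI exI[of _ CHole] exI[of _ P'] exI[of _ Nil])
      (auto simp: capture_free_def ltsC_CHole_iff sc_refl)
qed

lemma ltsCI_CPar_elim:
  assumes "ltsCI P (CPar T) P'"
  obtains \<alpha> S P'' where "\<alpha> \<noteq> Tau" "T = Sum (Pref (coname \<alpha>) S)" "pure_proc S"
    "ccs_trans P \<alpha> P''" "scong P' (Par P'' S)"
proof -
  obtain Ce Qe S where P: "pure_proc P" and "ltsC P Ce Qe" "pure_proc S" "capture_free S Qe"
    and Qe: "scong (subst_proc 1 S Qe) P'" and Ce: "subst_ctx 1 S Ce = CPar T"
    using assms unfolding ltsCI_def by blast
  moreover obtain T0 where "Ce = CPar T0" using Ce by (cases Ce) auto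
  ultimately obtain \<alpha> A Q M R where \<alpha>: "\<alpha> \<noteq> Tau" "T = Sum (Pref (coname \<alpha>) S)"
    and PA: "scong P (exposed A \<alpha> Q M R)" and A: "set A \<inter> fn_pre \<alpha> = {}"
    and Qe_def: "Qe = resL A (Par (Par Q R) (Var 1))"
    by (auto simp: ltsC_CPar_iff)
  have "pure_proc Q" "pure_proc R" using scong_pure[OF PA] P by simp_all
  then have P': "scong (resL A (Par (Par Q R) S)) P'" using Qe by (simp add: Qe_def subst_pure)
  have fresh: "set A \<inter> fn_proc S = {}"
    using \<open>capture_free S Qe\<close> by (auto simp: capture_free_def Qe_def)
  obtain P'' where "ccs_trans P \<alpha> P''" and P'': "scong P'' (resL A (Par Q R))"
    using ccs_trans_exposed[OF A PA] by blast
  have "scong P' (resL A (Par (Par Q R) S))" by (rule sc_sym[OF P'])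
  also have "scong \<dots> (Par (resL A (Par Q R)) S)" by (rule sc_sym[OF scong_resL_Par_left[OF fresh]])
  also have "scong \<dots> (Par P'' S)" by (rule sc_par[OF sc_sym[OF P''] sc_refl])
  finally have "scong P' (Par P'' S)" .
  with \<alpha> \<open>pure_proc S\<close> \<open>ccs_trans P \<alpha> P''\<close> show thesis by (rule that)
qed

lemma ltsCI_CPar_intro:
  assumes P: "pure_proc P" and S: "pure_proc S" and "\<alpha> \<noteq> Tau" and T: "ccs_trans P \<alpha> P'"
  shows "ltsCI P (CPar (Sum (Pref (coname \<alpha>) S))) (Par P' S)"
proof -
  obtain A Q M R where PA: "scong P (exposed A \<alpha> Q M R)"
    and A: "set A \<inter> (fn_proc S \<union> fn_pre \<alpha>) = {}" and P': "scong P' (resL A (Par Q R))"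
    using ccs_trans_visible_exposed[OF T \<open>\<alpha> \<noteq> Tau\<close> finite_fn(1)] by blast
  txt \<open>Substituting \<open>S\<close> must not capture its free names: rename the bound names of
    \<open>Q\<close> and \<open>R\<close> apart from them.\<close>
  obtain Q' where Q': "scong Q Q'" "bn_proc Q' \<inter> fn_proc S = {}"
    using scong_fresh_bn(1)[OF finite_fn(1)] by blast
  obtain R' where R': "scong R R'" "bn_proc R' \<inter> fn_proc S = {}"
    using scong_fresh_bn(1)[OF finite_fn(1)] by blast
  have PA': "scong P (exposed A \<alpha> Q' M R')"
    using PA by (rule sc_trans[OF _ scong_resL[OF sc_par[OF sc_sum[OF ss_plus[OF ss_pref[OF Q'(1)]
          ss_refl]] R'(1)]]])
  let ?Qe = "resL A (Par (Par Q' R') (Var 1))"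
  have "ltsC P (CPar (Sum (Pref (coname \<alpha>) (Var 1)))) ?Qe"
    using \<open>\<alpha> \<noteq> Tau\<close> PA' A by (intro ltsC_exposed) auto
  moreover have "capture_free S ?Qe" using A Q'(2) R'(2) by (auto simp: capture_free_def)
  moreover have "pure_proc Q'" "pure_proc R'" using scong_pure[OF PA'] P by simp_all
  then have "subst_proc 1 S ?Qe = resL A (Par (Par Q' R') S)" by (simp add: subst_pure)
  moreover have "scong (resL A (Par (Par Q' R') S)) (Par P' S)"
  proof -
    have "scong (resL A (Par (Par Q' R') S)) (Par (resL A (Par Q' R')) S)"
      using A by (intro sc_sym[OF scong_resL_Par_left]) auto
    also have "scong \<dots> (Par P' S)"
      by (rule sc_par[OF sc_sym[OF sc_trans[OF P' scong_resL[OF sc_par[OF Q'(1) R'(1)]]]] sc_refl])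
    finally show ?thesis .
  qed
  ultimately show ?thesis
    unfolding ltsCI_def using P S
    by (intro conjI exI[of _ "CPar (Sum (Pref (coname \<alpha>) (Var 1)))"] exI[of _ ?Qe] exI[of _ S]) simp_all
qed

lemma ltsCI_pure:
  assumes "ltsCI P C P'"
  shows "pure_proc P'"
proof (cases C)
  case CHole
  with assms show ?thesis by (auto simp: ltsCI_CHole_iff red_pure)
next
  case (CPar T)
  have "pure_proc P" using assms unfolding ltsCI_def by blast
  from assms[unfolded CPar] show ?thesis
  proof (rule ltsCI_CPar_elim)
    fix \<alpha> S P''
    assume "pure_proc S" "ccs_trans P \<alpha> P''" "scong P' (Par P'' S)"
    then show ?thesis using ccs_trans_pure[OF _ \<open>pure_proc P\<close>] scong_pure by fastforce
  qed
qed

section \<open>The two bisimilarities coincide\<close>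

text \<open>Every label of \<open>C\<^sub>I\<close> belongs to \<open>L_CCS\<close>, so an \<open>L_CCS\<close>-bisimulation only ever
  uses its first clause.\<close>

lemma L_bisim_L_CCS_step:
  assumes "L_bisim L_CCS Rel" "Rel P Q" "ltsCI P C P'"
  shows "\<exists>Q'. ltsCI Q C Q' \<and> Rel P' Q'"
proof -
  have "C \<in> L_CCS" using assms(3) unfolding L_CCS_def by blast
  moreover have "if C \<in> L_CCS then \<exists>Q'. ltsCI Q C Q' \<and> Rel P' Q'
      else \<exists>Q'. red (fill C Q) Q' \<and> Rel P' Q'"
    using assms unfolding L_bisim_def by blast
  ultimately show ?thesis by simp
qed

lemma L_bisim_L_CCS_ccs_trans_step:
  assumes Rel: "L_bisim L_CCS Rel" "Rel P Q" and T: "ccs_trans P \<alpha> P'"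
  shows "\<exists>Q' P1 Q1. ccs_trans Q \<alpha> Q' \<and> scong P' P1 \<and> Rel P1 Q1 \<and> scong Q1 Q'"
proof -
  have pure: "pure_proc P" "pure_proc Q" using Rel unfolding L_bisim_def by blast+
  show ?thesis
  proof (cases "\<alpha> = Tau")
    case True
    then have "ltsCI P CHole P'" using pure(1) T by (simp add: ltsCI_CHole_iff ccs_trans_Tau_red)
    then obtain Q1 where "ltsCI Q CHole Q1" "Rel P' Q1" using L_bisim_L_CCS_step[OF Rel] by blast
    then obtain Q' where "ccs_trans Q Tau Q'" "scong Q' Q1"
      by (auto simp: ltsCI_CHole_iff red_iff_ccs_trans_Tau)
    with True \<open>Rel P' Q1\<close> sc_refl[of P'] sc_sym[OF \<open>scong Q' Q1\<close>] show ?thesis by blast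
  next
    case False
    txt \<open>Observe the step through the context \<open>- | co\<alpha>.0\<close>, whose continuation is inert.\<close>
    have "ltsCI P (CPar (Sum (Pref (coname \<alpha>) Nil))) (Par P' Nil)"
      using ltsCI_CPar_intro[OF pure(1) _ False T] by simp
    then obtain Q1 where Q1: "ltsCI Q (CPar (Sum (Pref (coname \<alpha>) Nil))) Q1" "Rel (Par P' Nil) Q1"
      using L_bisim_L_CCS_step[OF Rel] by blast
    from Q1(1) show ?thesis
    proof (rule ltsCI_CPar_elim)
      fix \<beta> S Q'
      assume "Sum (Pref (coname \<alpha>) Nil) = Sum (Pref (coname \<beta>) S)" "ccs_trans Q \<beta> Q'"
        and "scong Q1 (Par Q' S)"
      then have "ccs_trans Q \<alpha> Q'" and "scong Q1 (Par Q' Nil)" by simp_all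
      with Q1(2) sc_sym[OF sc_par_nil[of P']] sc_trans[OF this(2) sc_par_nil]
      show ?thesis by blast
    qed
  qed
qed

lemma L_bisimilar_sym: "L_bisimilar L P Q \<Longrightarrow> L_bisimilar L Q P"
proof -
  assume "L_bisimilar L P Q"
  then obtain Rel where "L_bisim L Rel" "Rel P Q" unfolding L_bisimilar_def by blast
  moreover from this have "Rel Q P" unfolding L_bisim_def by blast
  ultimately show ?thesis unfolding L_bisimilar_def by (intro exI[of _ Rel] conjI)
qed

lemma L_bisimilar_imp_ccs_bisimilar:
  assumes "L_bisimilar L_CCS P Q"
  shows "ccs_bisimilar P Q"
proof (rule ccs_bisimilar_upto_scong[where Rel = "L_bisimilar L_CCS", OF assms L_bisimilar_sym])
  fix P Q \<alpha> P'
  assume "L_bisimilar L_CCS P Q" "ccs_trans P \<alpha> P'"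
  then obtain Rel where Rel: "L_bisim L_CCS Rel" "Rel P Q" unfolding L_bisimilar_def by blast
  then obtain Q' P1 Q1 where "ccs_trans Q \<alpha> Q'" "scong P' P1" "Rel P1 Q1" "scong Q1 Q'"
    using L_bisim_L_CCS_ccs_trans_step \<open>ccs_trans P \<alpha> P'\<close> by blast
  moreover have "L_bisimilar L_CCS P1 Q1"
    using Rel(1) \<open>Rel P1 Q1\<close> unfolding L_bisimilar_def by (intro exI[of _ Rel] conjI)
  ultimately show "\<exists>Q' P1 Q1. ccs_trans Q \<alpha> Q' \<and> scong P' P1 \<and> L_bisimilar L_CCS P1 Q1 \<and> scong Q1 Q'"
    by blast
qed

lemma ccs_bisimilar_ltsCI_step:
  assumes Q: "pure_proc Q" and PQ: "ccs_bisimilar P Q" and T: "ltsCI P C P'"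
  shows "\<exists>Q'. ltsCI Q C Q' \<and> ccs_bisimilar P' Q'"
proof (cases C)
  case CHole
  then obtain P'' where "ccs_trans P Tau P''" "scong P'' P'"
    using T by (auto simp: ltsCI_CHole_iff red_iff_ccs_trans_Tau)
  moreover obtain Q' where "ccs_trans Q Tau Q'" "ccs_bisimilar P'' Q'"
    using ccs_bisimilarD[OF PQ calculation(1)] by blast
  ultimately have "ltsCI Q C Q'" "ccs_bisimilar P' Q'"
    using CHole Q ccs_bisimilar_trans[OF scong_ccs_bisimilar[OF sc_sym]]
    by (auto simp: ltsCI_CHole_iff ccs_trans_Tau_red)
  then show ?thesis by blast
next
  case (CPar T)
  from \<open>ltsCI P C P'\<close>[unfolded CPar] show ?thesis
  proof (rule ltsCI_CPar_elim)
    fix \<alpha> S P''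
    assume "\<alpha> \<noteq> Tau" "T = Sum (Pref (coname \<alpha>) S)" "pure_proc S" "ccs_trans P \<alpha> P''"
      and P': "scong P' (Par P'' S)"
    moreover obtain Q' where "ccs_trans Q \<alpha> Q'" "ccs_bisimilar P'' Q'"
      using ccs_bisimilarD[OF PQ \<open>ccs_trans P \<alpha> P''\<close>] by blast
    ultimately show ?thesis
      using CPar ltsCI_CPar_intro[OF Q]
        ccs_bisimilar_trans[OF scong_ccs_bisimilar[OF P'] ccs_bisimilar_Par]
      by blast
  qed
qed

lemma ccs_bisimilar_imp_L_bisimilar:
  assumes "pure_proc P" "pure_proc Q" "ccs_bisimilar P Q"
  shows "L_bisimilar L_CCS P Q"
proof -
  let ?Rel = "\<lambda>P Q. pure_proc P \<and> pure_proc Q \<and> ccs_bisimilar P Q"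
  have "L_bisim L_CCS ?Rel"
    unfolding L_bisim_def
  proof (rule conjI; intro allI impI)
    fix P Q assume "?Rel P Q"
    then show "pure_proc P \<and> pure_proc Q \<and> pure_proc Q \<and> pure_proc P \<and> ccs_bisimilar Q P"
      using ccs_bisimilar_sym[of P Q] by simp
  next
    fix P Q C P' assume "?Rel P Q \<and> ltsCI P C P'"
    then obtain Q' where "ltsCI Q C Q'" "ccs_bisimilar P' Q'"
      using ccs_bisimilar_ltsCI_step by blast
    moreover have "C \<in> L_CCS" using \<open>ltsCI Q C Q'\<close> unfolding L_CCS_def by blast
    ultimately show "if C \<in> L_CCS then \<exists>Q'. ltsCI Q C Q' \<and> ?Rel P' Q'
        else \<exists>Q'. red (fill C Q) Q' \<and> ?Rel P' Q'"
      using \<open>?Rel P Q \<and> ltsCI P C P'\<close> by (auto intro: ltsCI_pure)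
  qed
  with assms show ?thesis unfolding L_bisimilar_def by (intro exI[of _ ?Rel]) simp
qed

theorem mainTheorem8:
  assumes "pure_proc P" and "pure_proc Q"
  shows "L_bisimilar L_CCS P Q \<longleftrightarrow> ccs_bisimilar P Q"
  using L_bisimilar_imp_ccs_bisimilar ccs_bisimilar_imp_L_bisimilar assms by blast

end
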